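(* Let $\mathbf{z}\in\mathrm{GF}(2)^{2\times 30}$ be arbitrary and define binary $6\times 30$ matrices $\mathbf{Z_1},\mathbf{Z_2},\mathbf{Z_3}$ by: rows 1–2 of $\mathbf{Z_1}$ equal $\mathbf{z}$; rows 3–4 of $\mathbf{Z_1}$ equal $f(\text{rows }1\text{–}2 \text{ of } \mathbf{Z_1})$; rows 5–6 of $\mathbf{Z_1}$ equal $f(\text{rows }3\text{–}4\text{ of }\mathbf{Z_1})$; $\mathbf{Z_2}=g(\mathbf{Z_1})$; $\mathbf{Z_3}=g(\mathbf{Z_2})$. Let $\mathbf{W_1},\mathbf{W_2},\mathbf{W_3}$ be the $10\times 30$ matrices selecting the coordinates of files $A$, $B$, $C$ respectively (i.e., $\mathbf{W_1}=[I_{10}\ 0\ 0]$, $\mathbf{W_2}=[0\ I_{10}\ 0]$, $\mathbf{W_3}=[0\ 0\ I_{10}]$). For $S,T\subseteq\{1,2,3\}$ let $\mathbf{M}(S,T)$ be the matrix obtained by stacking $\mathbf{W_j}$ for $j\in S$ and $\mathbf{Z_i}$ for $i\in T$. Then for any $S,S',T,T'\subseteq\{1,2,3\}$ with $|S|=|S'|$ and $|T|=|T'|$, we have $\operatorname{rank}\mathbf{M}(S,T)=\operatorname{rank}\mathbf{M}(S',T')$ over $\mathrm{GF}(2)$; equivalently, the joint entropies $H(\{W_j\}_{j\in S},\{Z_i\}_{i\in T})$ and $H(\{W_j\}_{j\in S'},\{Z_i\}_{i\in T'})$ are equal.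
   Context: Three files $A=W_1$, $B=W_2$, $C=W_3$ are each split into 10 subfiles $A_1,\dots,A_{10}$, $B_1,\dots,B_{10}$, $C_1,\dots,C_{10}$, all i.i.d. uniform bit strings of equal length; the information vector is $\mathbf{W}=[A_1,\dots,A_{10},B_1,\dots,B_{10},C_1,\dots,C_{10}]$, so coordinates $1$–$10$, $11$–$20$, $21$–$30$ correspond to $A$, $B$, $C$. A binary matrix $\mathbf{G}$ with 30 columns represents the linear code $\mathbf{G}\mathbf{W}^{T}$, and cache $Z_i$ is $\mathbf{Z_i}\mathbf{W}^T$, file $W_j$ is $\mathbf{W_j}\mathbf{W}^T$; the entropy of a collection of such variables equals the rank of the stacked generator matrices times the subfile size. Column operations on matrices with 30 columns (applied to each row): $f$ moves the coefficient of $A_i$ to the position of $B_i$, that of $B_i$ to $C_i$, that of $C_i$ to $A_i$ (for all $i=1,\dots,10$), i.e., it relabels files $A\mapsto B\mapsto C\mapsto A$; $g$ moves, within each file, the coefficient of subfile $i$ to subfile $i+3$ reduced into $\{1,\dots,9\}$ modulo 9 (so $1\mapsto4,\dots,6\mapsto 9, 7\mapsto1, 8\mapsto 2, 9\mapsto 3$) for $1\le i\le 9$, and fixes subfile $10$. For example, $f\circ g$ sends the row representing $A_2\oplus B_3\oplus C_9\oplus C_{10}$ to the row representing $B_5\oplus C_6\oplus A_3\oplus A_{10}$. *)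

theory Defs
  imports "HOL-Library.Z2" "Jordan_Normal_Form.DL_Rank"
begin

text \<open>GF(2) is the type bit (HOL-Library.Z2). Coordinates are 0-based:
  column j (0 \<le> j < 30) is subfile (j mod 10) + 1 of file (j div 10) + 1,
  files 1,2,3 being A,B,C.\<close>

text \<open>Operation f: the coefficient at position j moves to position (j+10) mod 30
  (A_i to B_i, B_i to C_i, C_i to A_i). So new entry j = old entry (j+20) mod 30.\<close>
definition f_op :: "bit mat \<Rightarrow> bit mat" where
  "f_op A = mat (dim_row A) 30 (\<lambda>(r, j). A $$ (r, (j + 20) mod 30))"

text \<open>Operation g: within each file, subfile i (1-based, 1..9) moves to
  subfile ((i+2) mod 9)+1, i.e. 0-based s moves to (s+3) mod 9; subfile 10
  (0-based 9) fixed. New entry at 0-based s equals old entry at (s+6) mod 9.\<close>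
definition g_src :: "nat \<Rightarrow> nat" where
  "g_src j = (if j mod 10 = 9 then j else 10 * (j div 10) + ((j mod 10) + 6) mod 9)"

definition g_op :: "bit mat \<Rightarrow> bit mat" where
  "g_op A = mat (dim_row A) 30 (\<lambda>(r, j). A $$ (r, g_src j))"

definition Z1 :: "bit mat \<Rightarrow> bit mat" where
  "Z1 z = z @\<^sub>r f_op z @\<^sub>r f_op (f_op z)"

definition Zmat :: "bit mat \<Rightarrow> nat \<Rightarrow> bit mat" where
  "Zmat z i = (if i = 1 then Z1 z else if i = 2 then g_op (Z1 z) else g_op (g_op (Z1 z)))"

definition Wmat :: "nat \<Rightarrow> bit mat" where
  "Wmat j = mat 10 30 (\<lambda>(r, c). if c = 10 * (j - 1) + r then 1 else 0)"

definition stack :: "bit mat list \<Rightarrow> bit mat" where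
  "stack Ms = foldr (\<lambda>A B. A @\<^sub>r B) Ms (0\<^sub>m 0 30)"

definition Mmat :: "bit mat \<Rightarrow> nat set \<Rightarrow> nat set \<Rightarrow> bit mat" where
  "Mmat z S T = stack (map Wmat (sorted_list_of_set S) @ map (Zmat z) (sorted_list_of_set T))"

definition gf2_rank :: "bit mat \<Rightarrow> nat" where
  "gf2_rank A = vec_space.rank (dim_row A) A"

end

theory Submission
  imports Defs "HOL-Combinatorics.Permutations"
begin

(* Both f and g permute columns, so they preserve rank; row permutations preserve rank as
   well. Applying f to M(S,T) turns the rows of each W_j into those of W_(\<sigma> j), where \<sigma> is
   the cyclic shift 1 -> 2 -> 3 -> 1, and only permutes the rows of each Z_i: Z_1 consists of
   z, f z, f (f z), f has order 3 and commutes with g. Applying g permutes the rows of each W_j,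
   since g preserves files, and turns Z_i into Z_(\<sigma> i), since g has order 3. Hence
   rank M(S,T) = rank M(\<sigma> S, T) = rank M(S, \<sigma> T), and two subsets of {1,2,3} of equal
   size lie in the same \<sigma>-orbit. *)

definition permute_vec :: "(nat \<Rightarrow> nat) \<Rightarrow> 'a vec \<Rightarrow> 'a vec" where
  "permute_vec p v = vec (dim_vec v) (\<lambda>i. v $ p i)"

definition permute_cols :: "(nat \<Rightarrow> nat) \<Rightarrow> 'a mat \<Rightarrow> 'a mat" where
  "permute_cols p A = mat (dim_row A) (dim_col A) (\<lambda>(r, j). A $$ (r, p j))"

lemma dim_permute_vec [simp]: "dim_vec (permute_vec p v) = dim_vec v"
  by (simp add: permute_vec_def)

lemma index_permute_vec [simp]: "i < dim_vec v \<Longrightarrow> permute_vec p v $ i = v $ p i"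
  by (simp add: permute_vec_def)

lemma permute_vec_carrier [simp]: "permute_vec p v \<in> carrier_vec n \<longleftrightarrow> v \<in> carrier_vec n"
  by (metis carrier_vecD carrier_vecI dim_permute_vec)

lemma permute_vec_order3:
  assumes "\<And>i. i < dim_vec v \<Longrightarrow> p i < dim_vec v" "\<And>i. i < dim_vec v \<Longrightarrow> p (p (p i)) = i"
  shows "permute_vec p (permute_vec p (permute_vec p v)) = v"
  using assms by (intro eq_vecI) auto

lemma permute_vec_commute:
  assumes "\<And>i. i < dim_vec v \<Longrightarrow> p i < dim_vec v" "\<And>i. i < dim_vec v \<Longrightarrow> q i < dim_vec v"
    and "\<And>i. i < dim_vec v \<Longrightarrow> p (q i) = q (p i)"
  shows "permute_vec p (permute_vec q v) = permute_vec q (permute_vec p v)"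
  using assms by (intro eq_vecI) auto

lemma permute_vec_unit_vec:
  assumes "\<And>i. i < n \<Longrightarrow> p i < n" "\<And>i. i < n \<Longrightarrow> p i = k \<longleftrightarrow> i = k'"
  shows "permute_vec p (unit_vec n k) = unit_vec n k'"
  using assms by (intro eq_vecI) (auto simp: unit_vec_def)

lemma permute_vec_unit_vec_order3:
  assumes "\<And>i. i < n \<Longrightarrow> p i < n" "\<And>i. i < n \<Longrightarrow> p (p (p i)) = i" "k < n"
  shows "permute_vec p (unit_vec n k) = unit_vec n (p (p k))"
  using assms by (intro permute_vec_unit_vec) metis+

lemma order3_image:
  assumes "\<And>i. i < n \<Longrightarrow> p i < n" "\<And>i. i < n \<Longrightarrow> p (p (p i)) = i"
  shows "p ` {..<n} = {..<n}"
proof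
  show "{..<n} \<subseteq> p ` {..<n}"
  proof
    fix i assume "i \<in> {..<n}"
    then have "i = p (p (p i))" "p (p i) \<in> {..<n}" using assms by auto
    then show "i \<in> p ` {..<n}" by blast
  qed
qed (use assms in auto)

lemma map_permute_vec_order3:
  assumes "set xs \<subseteq> carrier_vec n" "\<And>i. i < n \<Longrightarrow> p i < n" "\<And>i. i < n \<Longrightarrow> p (p (p i)) = i"
  shows "map (permute_vec p) (map (permute_vec p) (map (permute_vec p) xs)) = xs"
proof -
  have "permute_vec p (permute_vec p (permute_vec p v)) = v" if "v \<in> set xs" for v
    using carrier_vecD[OF subsetD[OF assms(1) that]] assms(2,3) by (intro permute_vec_order3) auto
  then show ?thesis unfolding map_map by (intro map_idI) simp
qed

lemma map_permute_vec_commute: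
  assumes "set xs \<subseteq> carrier_vec n" "\<And>i. i < n \<Longrightarrow> p i < n" "\<And>i. i < n \<Longrightarrow> q i < n"
    and "\<And>i. i < n \<Longrightarrow> p (q i) = q (p i)"
  shows "map (permute_vec p) (map (permute_vec q) xs) = map (permute_vec q) (map (permute_vec p) xs)"
proof -
  have "permute_vec p (permute_vec q v) = permute_vec q (permute_vec p v)" if "v \<in> set xs" for v
    using carrier_vecD[OF subsetD[OF assms(1) that]] assms(2-4) by (intro permute_vec_commute) auto
  then show ?thesis by simp
qed

lemma mset_map_map_commute:
  assumes "mset (map f xs) = mset xs" "map f (map g xs) = map g (map f xs)"
  shows "mset (map f (map g xs)) = mset (map g xs)"
  by (metis assms mset_map)

lemma inj_on_permute_vec:
  assumes "p ` {..<n} = {..<n}"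
  shows "inj_on (permute_vec p) (carrier_vec n)"
proof
  fix u v :: "'a vec"
  assume u: "u \<in> carrier_vec n" and v: "v \<in> carrier_vec n" and eq: "permute_vec p u = permute_vec p v"
  show "u = v"
  proof (rule eq_vecI)
    fix i assume "i < dim_vec v"
    then obtain j where "j < n" "i = p j" using assms v by (metis carrier_vecD imageE lessThan_iff)
    then show "u $ i = v $ i" using arg_cong[OF eq, of "\<lambda>w. w $ j"] u v by simp
  qed (use u v in simp)
qed

lemma (in vec_space) lincomb_permute_vec_image:
  assumes p: "p ` {..<n} = {..<n}" and S: "finite S" "S \<subseteq> carrier_vec n"
  shows "lincomb a (permute_vec p ` S) = permute_vec p (lincomb (a \<circ> permute_vec p) S)"
proof -
  have inj: "inj_on (permute_vec p) S"
    using inj_on_subset[OF inj_on_permute_vec[OF p] S(2)] .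
  have imS: "permute_vec p ` S \<subseteq> carrier_vec n" using S(2) by auto
  show ?thesis
  proof (rule eq_vecI)
    fix i assume "i < dim_vec (permute_vec p (lincomb (a \<circ> permute_vec p) S))"
    then have i: "i < n" and pi: "p i < n" using lincomb_dim[OF S] p by auto
    have "lincomb a (permute_vec p ` S) $ i = (\<Sum>y\<in>permute_vec p ` S. a y * y $ i)"
      using lincomb_index[OF i imS] .
    also have "\<dots> = (\<Sum>x\<in>S. a (permute_vec p x) * x $ p i)"
      unfolding sum.reindex[OF inj] using S(2) i by (intro sum.cong) auto
    also have "\<dots> = permute_vec p (lincomb (a \<circ> permute_vec p) S) $ i"
      using lincomb_index[OF pi S(2)] lincomb_dim[OF S] i by simp
    finally show "lincomb a (permute_vec p ` S) $ i = permute_vec p (lincomb (a \<circ> permute_vec p) S) $ i" .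
  qed (simp add: lincomb_dim[OF finite_imageI[OF S(1)] imS] lincomb_dim[OF S])
qed

lemma (in vec_space) lin_indpt_permute_vec_image:
  assumes p: "p ` {..<n} = {..<n}" and S: "finite S" "S \<subseteq> carrier_vec n" "lin_indpt S"
  shows "lin_indpt (permute_vec p ` S)"
proof (rule finite_lin_indpt2)
  show "finite (permute_vec p ` S)" "permute_vec p ` S \<subseteq> carrier_vec n"
    using S by auto
  have zero: "permute_vec p (0\<^sub>v n) = 0\<^sub>v n"
    using p by (intro eq_vecI) (auto simp: image_subset_iff dest: equalityD1)
  fix a assume "lincomb a (permute_vec p ` S) = 0\<^sub>v n"
  then have "permute_vec p (lincomb (a \<circ> permute_vec p) S) = permute_vec p (0\<^sub>v n)"
    by (simp add: lincomb_permute_vec_image[OF p S(1,2)] zero)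
  then have "lincomb (a \<circ> permute_vec p) S = 0\<^sub>v n"
    using inj_onD[OF inj_on_permute_vec[OF p]] lincomb_closed[OF S(2)] by auto
  then have "a \<circ> permute_vec p \<in> S \<rightarrow> {0}"
    using not_lindepD[OF S(3) S(1)] by auto
  then show "\<forall>v\<in>permute_vec p ` S. a v = 0" by (simp add: Pi_iff)
qed

lemma set_cols_permute_rows:
  assumes "A \<in> carrier_mat n nc" "B \<in> carrier_mat n nc" "\<And>i. i < n \<Longrightarrow> row B i = row A (p i)"
    and "p ` {..<n} \<subseteq> {..<n}"
  shows "set (cols B) = permute_vec p ` set (cols A)"
proof -
  have "col B c = permute_vec p (col A c)" if c: "c < nc" for c
  proof (rule eq_vecI)
    fix i assume "i < dim_vec (permute_vec p (col A c))"
    then have i: "i < n" and pi: "p i < n" using assms(1,4) by auto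
    have "col B c $ i = row B i $ c" using assms(2) i c by simp
    also have "\<dots> = row A (p i) $ c" using assms(3) i by simp
    also have "\<dots> = permute_vec p (col A c) $ i" using assms(1) i pi c by simp
    finally show "col B c $ i = permute_vec p (col A c) $ i" .
  qed (use assms(1,2) in simp)
  then show ?thesis using assms(1,2) by (auto simp: cols_def)
qed

lemma (in vec_space) rank_le_if_mset_rows_eq:
  assumes A: "A \<in> carrier_mat n nc" and B: "B \<in> carrier_mat n nc"
    and rows: "mset (rows A) = mset (rows B)"
  shows "rank A \<le> rank B"
proof -
  obtain p where p: "p permutes {..<length (rows A)}" and perm: "permute_list p (rows A) = rows B"
    by (rule mset_eq_permutation[OF rows[symmetric]])
  have pn: "p permutes {..<n}" using p A by simp
  have "row B i = row A (p i)" if "i < n" for i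
  proof -
    have "row B i = rows B ! i" using B that by simp
    also have "\<dots> = rows A ! p i" using permute_list_nth[OF p] perm A that by auto
    also have "\<dots> = row A (p i)" using permutes_in_image[OF pn] A that by simp
    finally show ?thesis .
  qed
  then have colsB: "set (cols B) = permute_vec p ` set (cols A)"
    using set_cols_permute_rows[OF A B] permutes_image[OF pn] by blast
  have colsA: "set (cols A) \<subseteq> carrier_vec n" using A by (auto simp: cols_def)
  have "lin_indpt {}" by (simp add: lin_dep_def)
  then obtain S where S: "maximal S (\<lambda>T. T \<subseteq> set (cols A) \<and> lin_indpt T)"
    using maximal_exists_superset[of "set (cols A)" "\<lambda>T. T \<subseteq> set (cols A) \<and> lin_indpt T" "{}"]
    by blast
  then have SA: "S \<subseteq> set (cols A)" "lin_indpt S" by (simp_all add: maximal_def)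
  then have fin: "finite S" and Sc: "S \<subseteq> carrier_vec n" using colsA finite_subset by auto
  have "rank A = card S" by (rule rank_card_indpt[OF A S])
  also have "\<dots> = card (permute_vec p ` S)"
    using card_image[OF inj_on_subset[OF inj_on_permute_vec[OF permutes_image[OF pn]] Sc]] by simp
  also have "\<dots> \<le> rank B"
    using rank_ge_card_indpt[OF B _ lin_indpt_permute_vec_image[OF permutes_image[OF pn] fin Sc SA(2)]]
      colsB SA(1) by blast
  finally show ?thesis .
qed

lemma (in vec_space) rank_eq_if_mset_rows_eq:
  assumes "A \<in> carrier_mat n nc" "B \<in> carrier_mat n nc" "mset (rows A) = mset (rows B)"
  shows "rank A = rank B"
  using rank_le_if_mset_rows_eq[OF assms] rank_le_if_mset_rows_eq[OF assms(2,1) assms(3)[symmetric]]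
  by simp

lemma set_cols_eq_image: "set (cols A) = col A ` {..<dim_col A}"
  by (auto simp: cols_def)

lemma (in vec_space) rank_permute_cols:
  assumes A: "A \<in> carrier_mat n nc" and p: "p ` {..<nc} = {..<nc}"
  shows "rank (permute_cols p A) = rank A"
proof -
  have "col (permute_cols p A) j = col A (p j)" if "j < nc" for j
  proof -
    have "p j < nc" using p that by auto
    then show ?thesis using A that by (intro eq_vecI) (auto simp: permute_cols_def)
  qed
  then have "set (cols (permute_cols p A)) = col A ` p ` {..<nc}"
    using A by (simp add: set_cols_eq_image permute_cols_def image_image)
  then show ?thesis unfolding rank_def using A p by (simp add: set_cols_eq_image)
qed

lemma rows_permute_cols:
  "(\<And>j. j < dim_col A \<Longrightarrow> p j < dim_col A) \<Longrightarrow> rows (permute_cols p A) = map (permute_vec p) (rows A)"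
  by (intro nth_equalityI eq_vecI) (auto simp: permute_cols_def)

lemma gf2_rank_eq_if_mset_rows_eq:
  assumes "dim_col A = dim_col B" "mset (rows A) = mset (rows B)"
  shows "gf2_rank A = gf2_rank B"
proof -
  have rows: "dim_row B = dim_row A" using mset_eq_length[OF assms(2)] by simp
  have "vec_space.rank (dim_row A) A = vec_space.rank (dim_row A) B"
    by (rule vec_space.rank_eq_if_mset_rows_eq[OF carrier_matI[OF refl refl]
          carrier_matI[OF rows assms(1)[symmetric]] assms(2)])
  then show ?thesis unfolding gf2_rank_def using rows by simp
qed

lemma gf2_rank_permute_cols:
  assumes "p ` {..<dim_col A} = {..<dim_col A}"
  shows "gf2_rank (permute_cols p A) = gf2_rank A"
proof -
  have "vec_space.rank (dim_row A) (permute_cols p A) = vec_space.rank (dim_row A) A"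
    by (rule vec_space.rank_permute_cols[OF carrier_matI[OF refl refl] assms])
  then show ?thesis unfolding gf2_rank_def by (simp add: permute_cols_def)
qed

lemma rows_append_rows:
  assumes "dim_col B = dim_col A"
  shows "rows (A @\<^sub>r B) = rows A @ rows B"
proof (rule nth_equalityI)
  show "length (rows (A @\<^sub>r B)) = length (rows A @ rows B)"
    by (simp add: append_rows_def)
  fix i assume "i < length (rows (A @\<^sub>r B))"
  then show "rows (A @\<^sub>r B) ! i = (rows A @ rows B) ! i"
    using assms by (intro eq_vecI) (auto simp: append_rows_def nth_append)
qed

lemma dim_col_append_rows [simp]: "dim_col (A @\<^sub>r B) = dim_col A"
  by (simp add: append_rows_def)

lemma stack_Cons: "stack (M # Ms) = M @\<^sub>r stack Ms"
  by (simp add: stack_def)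

lemma
  assumes "\<forall>M\<in>set Ms. dim_col M = 30"
  shows dim_col_stack: "dim_col (stack Ms) = 30"
    and rows_stack: "rows (stack Ms) = concat (map rows Ms)"
  using assms by (induction Ms) (simp_all add: stack_Cons rows_append_rows, simp_all add: stack_def rows_def)

lemma mset_concat_map_sorted_list_of_set:
  assumes "finite X"
  shows "mset (concat (map h (sorted_list_of_set X))) = (\<Sum>x\<in>X. mset (h x))"
  using assms by (simp add: mset_concat sum_list_distinct_conv_sum_set)

definition f_src :: "nat \<Rightarrow> nat" where
  "f_src j = (j + 20) mod 30"

lemma f_src_g_src_upto_30:
  "\<forall>j\<in>set [0..<30]. f_src j < 30 \<and> g_src j < 30 \<and> f_src (f_src (f_src j)) = j \<and>
     g_src (g_src (g_src j)) = j \<and> f_src (g_src j) = g_src (f_src j)"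
  unfolding f_src_def g_src_def by code_simp

lemma
  assumes "j < 30"
  shows f_src_lt: "f_src j < 30"
    and g_src_lt: "g_src j < 30"
    and f_src_cube: "f_src (f_src (f_src j)) = j"
    and g_src_cube: "g_src (g_src (g_src j)) = j"
    and f_src_g_src_commute: "f_src (g_src j) = g_src (f_src j)"
  using f_src_g_src_upto_30 assms by auto

lemma
  assumes "r < 10"
  shows g_src_block: "g_src (10 * q + r) = 10 * q + g_src r"
    and g_src_lt_10: "g_src r < 10"
  using assms mod_less_divisor[of 9 "r + 6"] by (auto simp: g_src_def)

lemma dim_f_op [simp]: "dim_row (f_op A) = dim_row A" "dim_col (f_op A) = 30"
  by (simp_all add: f_op_def)

lemma dim_g_op [simp]: "dim_row (g_op A) = dim_row A" "dim_col (g_op A) = 30"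
  by (simp_all add: g_op_def)

lemma f_op_eq_permute_cols: "dim_col A = 30 \<Longrightarrow> f_op A = permute_cols f_src A"
  by (simp add: f_op_def permute_cols_def f_src_def)

lemma g_op_eq_permute_cols: "dim_col A = 30 \<Longrightarrow> g_op A = permute_cols g_src A"
  by (simp add: g_op_def permute_cols_def)

lemma rows_f_op: "dim_col A = 30 \<Longrightarrow> rows (f_op A) = map (permute_vec f_src) (rows A)"
  by (simp add: f_op_eq_permute_cols rows_permute_cols f_src_lt)

lemma rows_g_op: "dim_col A = 30 \<Longrightarrow> rows (g_op A) = map (permute_vec g_src) (rows A)"
  by (simp add: g_op_eq_permute_cols rows_permute_cols g_src_lt)

definition cycle3 :: "nat \<Rightarrow> nat" where
  "cycle3 i = i mod 3 + 1"

lemma cycle3_simps: "cycle3 1 = 2" "cycle3 2 = 3" "cycle3 3 = 1"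
  by (simp_all add: cycle3_def)

lemma cycle3_image_subset: "cycle3 ` X \<subseteq> {1, 2, 3}"
  by (auto simp: cycle3_def)

lemma inj_on_cycle3: "inj_on cycle3 {1, 2, 3}"
  by (auto simp: inj_on_def cycle3_def)

lemma cycle3_orbits:
  "\<forall>S\<in>Pow {1, 2, 3}. \<forall>S'\<in>Pow {1, 2, 3}.
     card S = card S' \<longrightarrow> S' = S \<or> S' = cycle3 ` S \<or> S' = cycle3 ` cycle3 ` S"
  unfolding cycle3_def by code_simp

lemma cycle3_orbit:
  assumes "S \<subseteq> {1, 2, 3}" "S' \<subseteq> {1, 2, 3}" "card S = card S'"
  shows "S' = S \<or> S' = cycle3 ` S \<or> S' = cycle3 ` cycle3 ` S"
  using cycle3_orbits assms by blast

lemma rows_Wmat: "rows (Wmat j) = map (\<lambda>r. unit_vec 30 (10 * (j - 1) + r)) [0..<10]"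
  by (intro nth_equalityI eq_vecI) (auto simp: Wmat_def unit_vec_def)

lemma f_src_f_src_file_shift:
  "\<forall>j\<in>{1, 2, 3}. \<forall>r\<in>set [0..<10]. f_src (f_src (10 * (j - 1) + r)) = 10 * (cycle3 j - 1) + r"
  unfolding f_src_def cycle3_def by code_simp

lemma g_src_g_src_permutes_subfiles: "mset (map (\<lambda>r. g_src (g_src r)) [0..<10]) = mset [0..<10]"
  unfolding g_src_def by code_simp

lemma f_src_Wmat:
  assumes "j \<in> {1, 2, 3}"
  shows "map (permute_vec f_src) (rows (Wmat j)) = rows (Wmat (cycle3 j))"
proof -
  have "permute_vec f_src (unit_vec 30 (10 * (j - 1) + r)) = unit_vec 30 (10 * (cycle3 j - 1) + r)"
    if "r < 10" for r
    using permute_vec_unit_vec_order3[of 30 f_src, OF f_src_lt f_src_cube, of "10 * (j - 1) + r"]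
      f_src_f_src_file_shift assms that by auto
  then show ?thesis by (auto simp: rows_Wmat)
qed

lemma g_src_Wmat:
  assumes "j \<in> {1, 2, 3}"
  shows "mset (map (permute_vec g_src) (rows (Wmat j))) = mset (rows (Wmat j))"
proof -
  let ?e = "\<lambda>r. unit_vec 30 (10 * (j - 1) + r)"
  have "permute_vec g_src (?e r) = ?e (g_src (g_src r))" if "r < 10" for r
  proof -
    have "g_src (g_src (10 * (j - 1) + r)) = 10 * (j - 1) + g_src (g_src r)"
      using that by (simp add: g_src_block g_src_lt_10)
    then show ?thesis
      using permute_vec_unit_vec_order3[of 30 g_src, OF g_src_lt g_src_cube, of "10 * (j - 1) + r"]
        assms that by auto
  qed
  then have "map (permute_vec g_src) (rows (Wmat j)) = map ?e (map (\<lambda>r. g_src (g_src r)) [0..<10])"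
    by (auto simp: rows_Wmat)
  then have "mset (map (permute_vec g_src) (rows (Wmat j))) =
      image_mset ?e (mset (map (\<lambda>r. g_src (g_src r)) [0..<10]))"
    by (simp only: mset_map)
  also have "\<dots> = mset (rows (Wmat j))"
    by (subst g_src_g_src_permutes_subfiles) (simp add: rows_Wmat)
  finally show ?thesis .
qed

context
  fixes z :: "bit mat"
  assumes z: "dim_col z = 30"
begin

lemma dim_col_Z1: "dim_col (Z1 z) = 30"
  using z by (simp add: Z1_def)

lemma dim_col_Zmat: "dim_col (Zmat z i) = 30"
  using dim_col_Z1 by (simp add: Zmat_def)

lemma rows_Z1:
  "rows (Z1 z) = rows z @ map (permute_vec f_src) (rows z) @
     map (permute_vec f_src) (map (permute_vec f_src) (rows z))"
  using z by (simp add: Z1_def rows_append_rows rows_f_op)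

lemma rows_Z1_carrier: "set (rows (Z1 z)) \<subseteq> carrier_vec 30"
  using rows_carrier[of "Z1 z"] by (simp only: dim_col_Z1)

lemma rows_Zmat:
  "rows (Zmat z 1) = rows (Z1 z)"
  "rows (Zmat z 2) = map (permute_vec g_src) (rows (Z1 z))"
  "rows (Zmat z 3) = map (permute_vec g_src) (map (permute_vec g_src) (rows (Z1 z)))"
  by (simp_all add: Zmat_def rows_g_op dim_col_Z1)

lemma f_src_Z1: "mset (map (permute_vec f_src) (rows (Z1 z))) = mset (rows (Z1 z))"
proof -
  have "map (permute_vec f_src) (map (permute_vec f_src) (map (permute_vec f_src) (rows z))) = rows z"
    using rows_carrier[of z] z f_src_lt f_src_cube by (intro map_permute_vec_order3) simp_all
  then show ?thesis by (simp only: rows_Z1 map_append mset_append ac_simps)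
qed

lemma f_src_Zmat:
  assumes "i \<in> {1, 2, 3}"
  shows "mset (map (permute_vec f_src) (rows (Zmat z i))) = mset (rows (Zmat z i))"
proof -
  have commute: "map (permute_vec f_src) (map (permute_vec g_src) xs) =
      map (permute_vec g_src) (map (permute_vec f_src) xs)" if "set xs \<subseteq> carrier_vec 30" for xs :: "bit vec list"
    using that f_src_lt g_src_lt f_src_g_src_commute by (rule map_permute_vec_commute)
  have Z2: "mset (map (permute_vec f_src) (map (permute_vec g_src) (rows (Z1 z)))) =
      mset (map (permute_vec g_src) (rows (Z1 z)))"
    using f_src_Z1 commute[OF rows_Z1_carrier] by (rule mset_map_map_commute)
  have carrier_Z2: "set (map (permute_vec g_src) (rows (Z1 z))) \<subseteq> carrier_vec 30"
    using rows_Z1_carrier by auto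
  have Z3: "mset (map (permute_vec f_src) (map (permute_vec g_src) (map (permute_vec g_src) (rows (Z1 z))))) =
      mset (map (permute_vec g_src) (map (permute_vec g_src) (rows (Z1 z))))"
    by (rule mset_map_map_commute[OF Z2 commute[OF carrier_Z2]])
  have "i = 1 \<or> i = 2 \<or> i = 3" using assms by auto
  then show ?thesis using f_src_Z1 Z2 Z3 by (elim disjE) (simp_all only: rows_Zmat)
qed

lemma g_src_Zmat:
  assumes "i \<in> {1, 2, 3}"
  shows "map (permute_vec g_src) (rows (Zmat z i)) = rows (Zmat z (cycle3 i))"
proof -
  have "map (permute_vec g_src) (map (permute_vec g_src) (map (permute_vec g_src) (rows (Z1 z)))) =
      rows (Z1 z)"
    using rows_Z1_carrier g_src_lt g_src_cube by (rule map_permute_vec_order3)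
  moreover have "i = 1 \<or> i = 2 \<or> i = 3" using assms by auto
  ultimately show ?thesis by (elim disjE) (simp_all only: rows_Zmat cycle3_simps)
qed

lemma
  assumes "finite S" "finite T"
  shows dim_col_Mmat: "dim_col (Mmat z S T) = 30"
    and mset_map_rows_Mmat: "mset (map h (rows (Mmat z S T))) =
      (\<Sum>j\<in>S. mset (map h (rows (Wmat j)))) + (\<Sum>i\<in>T. mset (map h (rows (Zmat z i))))"
proof -
  have cols: "\<forall>M\<in>set (map Wmat (sorted_list_of_set S) @ map (Zmat z) (sorted_list_of_set T)). dim_col M = 30"
    by (auto simp: Wmat_def dim_col_Zmat)
  then show "dim_col (Mmat z S T) = 30" unfolding Mmat_def by (rule dim_col_stack)
  show "mset (map h (rows (Mmat z S T))) =
      (\<Sum>j\<in>S. mset (map h (rows (Wmat j)))) + (\<Sum>i\<in>T. mset (map h (rows (Zmat z i))))"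
    unfolding Mmat_def rows_stack[OF cols]
    using mset_concat_map_sorted_list_of_set[OF assms(1), of "\<lambda>j. map h (rows (Wmat j))"]
      mset_concat_map_sorted_list_of_set[OF assms(2), of "\<lambda>i. map h (rows (Zmat z i))"]
    by (simp add: map_concat comp_def)
qed

lemma gf2_rank_Mmat_relabel:
  assumes p: "p ` {..<30} = {..<30}"
    and W: "\<And>j. j \<in> {1, 2, 3} \<Longrightarrow> mset (map (permute_vec p) (rows (Wmat j))) = mset (rows (Wmat (\<alpha> j)))"
    and Z: "\<And>i. i \<in> {1, 2, 3} \<Longrightarrow> mset (map (permute_vec p) (rows (Zmat z i))) = mset (rows (Zmat z (\<beta> i)))"
    and inj: "inj_on \<alpha> {1, 2, 3}" "inj_on \<beta> {1, 2, 3}"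
    and S: "S \<subseteq> {1, 2, 3}" and T: "T \<subseteq> {1, 2, 3}"
  shows "gf2_rank (Mmat z (\<alpha> ` S) (\<beta> ` T)) = gf2_rank (Mmat z S T)"
proof -
  let ?M = "Mmat z S T"
  have fin: "finite S" "finite T" using S T finite_subset by auto
  have "mset (rows (permute_cols p ?M)) = mset (map (permute_vec p) (rows ?M))"
    using p dim_col_Mmat[OF fin] by (subst rows_permute_cols) auto
  also have "\<dots> = (\<Sum>j\<in>S. mset (rows (Wmat (\<alpha> j)))) + (\<Sum>i\<in>T. mset (rows (Zmat z (\<beta> i))))"
    unfolding mset_map_rows_Mmat[OF fin] using W Z S T by (intro arg_cong2[where f = "(+)"] sum.cong) auto
  also have "\<dots> = (\<Sum>j\<in>\<alpha> ` S. mset (rows (Wmat j))) + (\<Sum>i\<in>\<beta> ` T. mset (rows (Zmat z i)))"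
    using inj_on_subset[OF inj(1) S] inj_on_subset[OF inj(2) T] by (simp add: sum.reindex)
  also have "\<dots> = mset (rows (Mmat z (\<alpha> ` S) (\<beta> ` T)))"
    using mset_map_rows_Mmat[of "\<alpha> ` S" "\<beta> ` T" id] fin by simp
  finally have rows: "mset (rows (permute_cols p ?M)) = mset (rows (Mmat z (\<alpha> ` S) (\<beta> ` T)))" .
  have "gf2_rank (Mmat z (\<alpha> ` S) (\<beta> ` T)) = gf2_rank (permute_cols p ?M)"
    using rows dim_col_Mmat fin by (intro gf2_rank_eq_if_mset_rows_eq) (auto simp: permute_cols_def)
  also have "\<dots> = gf2_rank ?M"
    using p dim_col_Mmat[OF fin] by (simp add: gf2_rank_permute_cols)
  finally show ?thesis .
qed

lemma gf2_rank_Mmat_cycle3_files: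
  assumes "S \<subseteq> {1, 2, 3}" "T \<subseteq> {1, 2, 3}"
  shows "gf2_rank (Mmat z (cycle3 ` S) T) = gf2_rank (Mmat z S T)"
proof -
  have "gf2_rank (Mmat z (cycle3 ` S) (id ` T)) = gf2_rank (Mmat z S T)"
  proof (rule gf2_rank_Mmat_relabel[where p = f_src])
    show "f_src ` {..<30} = {..<30}" using f_src_lt f_src_cube by (rule order3_image)
    show "mset (map (permute_vec f_src) (rows (Wmat j))) = mset (rows (Wmat (cycle3 j)))"
      if "j \<in> {1, 2, 3}" for j
      using f_src_Wmat[OF that] by simp
    show "mset (map (permute_vec f_src) (rows (Zmat z i))) = mset (rows (Zmat z (id i)))"
      if "i \<in> {1, 2, 3}" for i
      using f_src_Zmat[OF that] by simp
  qed (use assms inj_on_cycle3 in auto)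
  then show ?thesis by simp
qed

lemma gf2_rank_Mmat_cycle3_caches:
  assumes "S \<subseteq> {1, 2, 3}" "T \<subseteq> {1, 2, 3}"
  shows "gf2_rank (Mmat z S (cycle3 ` T)) = gf2_rank (Mmat z S T)"
proof -
  have "gf2_rank (Mmat z (id ` S) (cycle3 ` T)) = gf2_rank (Mmat z S T)"
  proof (rule gf2_rank_Mmat_relabel[where p = g_src])
    show "g_src ` {..<30} = {..<30}" using g_src_lt g_src_cube by (rule order3_image)
    show "mset (map (permute_vec g_src) (rows (Wmat j))) = mset (rows (Wmat (id j)))"
      if "j \<in> {1, 2, 3}" for j
      using g_src_Wmat[OF that] by simp
    show "mset (map (permute_vec g_src) (rows (Zmat z i))) = mset (rows (Zmat z (cycle3 i)))"
      if "i \<in> {1, 2, 3}" for i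
      using g_src_Zmat[OF that] by simp
  qed (use assms inj_on_cycle3 in auto)
  then show ?thesis by simp
qed

lemma gf2_rank_Mmat_card_files:
  assumes "S \<subseteq> {1, 2, 3}" "S' \<subseteq> {1, 2, 3}" "card S = card S'" "T \<subseteq> {1, 2, 3}"
  shows "gf2_rank (Mmat z S' T) = gf2_rank (Mmat z S T)"
  using cycle3_orbit[OF assms(1-3)] gf2_rank_Mmat_cycle3_files[OF assms(1,4)]
    gf2_rank_Mmat_cycle3_files[OF cycle3_image_subset assms(4)]
  by auto

lemma gf2_rank_Mmat_card_caches:
  assumes "T \<subseteq> {1, 2, 3}" "T' \<subseteq> {1, 2, 3}" "card T = card T'" "S \<subseteq> {1, 2, 3}"
  shows "gf2_rank (Mmat z S T') = gf2_rank (Mmat z S T)"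
  using cycle3_orbit[OF assms(1-3)] gf2_rank_Mmat_cycle3_caches[OF assms(4,1)]
    gf2_rank_Mmat_cycle3_caches[OF assms(4) cycle3_image_subset]
  by auto

end

theorem proposition1:
  fixes z :: "bit mat" and S S' T T' :: "nat set"
  assumes "z \<in> carrier_mat 2 30"
    and "S \<subseteq> {1,2,3}" and "S' \<subseteq> {1,2,3}" and "T \<subseteq> {1,2,3}" and "T' \<subseteq> {1,2,3}"
    and "card S = card S'" and "card T = card T'"
  shows "gf2_rank (Mmat z S T) = gf2_rank (Mmat z S' T')"
proof -
  have z: "dim_col z = 30" using assms(1) by simp
  have "gf2_rank (Mmat z S' T) = gf2_rank (Mmat z S T)"
    using gf2_rank_Mmat_card_files[OF z assms(2,3,6,4)] .
  moreover have "gf2_rank (Mmat z S' T') = gf2_rank (Mmat z S' T)"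
    using gf2_rank_Mmat_card_caches[OF z assms(4,5,7,3)] .
  ultimately show ?thesis by simp
qed

end
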